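(* Let $a<0$ and $\mu=\frac{1}{1-a}\in(0,1)$. Define $$\bar\Omega_a(X)=-\sin(\pi\mu)\,\frac{\mathbf 1_{\{X>1\}}}{|1-X|^{\mu}},\qquad \bar c_{l,a}=1-a,\qquad \bar c_{\omega,a}=-1.$$ Then $\mathcal H(\bar\Omega_a)(X)=\frac{\mathbf 1_{\{X<1\}}+\mathbf 1_{\{X>1\}}\cos(\pi\mu)}{|1-X|^{\mu}}$, and with $\bar U_a(X)=\int_0^X\mathcal H(\bar\Omega_a)(Y)\,dY$, the triple $(\bar\Omega_a,\bar c_{l,a},\bar c_{\omega,a})$ solves the self-similar profile equation $$(\bar c_{l,a}X+a\bar U_a)\,(\bar\Omega_a)_X=(\bar c_{\omega,a}+(\bar U_a)_X)\,\bar\Omega_a$$ at every $X\ne1$.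
   Context: $\mathcal H$ denotes the Hilbert transform on $\mathbb R$: $\mathcal H(f)(x)=\frac1\pi\,\mathrm{P.V.}\int_{\mathbb R}\frac{f(y)}{x-y}\,dy$. $\mathbf 1_{A}$ is the indicator of the set $A$. *)

theory Defs
  imports "HOL-Analysis.Analysis"
begin

definition has_Hilbert_transform :: "(real \<Rightarrow> real) \<Rightarrow> real \<Rightarrow> real \<Rightarrow> bool" where
  "has_Hilbert_transform f x v \<longleftrightarrow>
     (\<forall>\<epsilon>>0. set_integrable lborel {y. \<epsilon> < \<bar>x - y\<bar>} (\<lambda>y. f y / (x - y))) \<and>
     ((\<lambda>\<epsilon>. (1 / pi) * (LINT y:{y. \<epsilon> < \<bar>x - y\<bar>}|lborel. f y / (x - y))) \<longlongrightarrow> v) (at_right 0)"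

definition Hilbert_transform :: "(real \<Rightarrow> real) \<Rightarrow> real \<Rightarrow> real" where
  "Hilbert_transform f x = (THE v. has_Hilbert_transform f x v)"

end

(*
  For x < 1 the truncated Hilbert integral of Omega_bar does not depend on the truncation, and the
  substitution y = 1 + (1 - x) v / (1 - v) turns it into the Beta integral B(1 - m, m) = pi / sin (pi m).
  For x > 1 the scaling y = 1 + (x - 1) u reduces the principal value to that of the integral of
  u^(-m) / (1 - u) over (0, oo); folding (1, oo) onto (0, 1) by u |-> 1/u leaves the integral of
  (u^(-m) - u^(m-1)) / (1 - u) over (0, 1), which equals Digamma m - Digamma (1 - m) = - pi cot (pi m)
  (expand 1 / (1 - u) as a geometric series, then use the reflection formula for Gamma), plus an error
  of order of the truncation. The velocity U is then integrated in closed form, and at X > 1 the profile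
  equation becomes a rational identity in X - 1 and (X - 1)^m that holds precisely because m = 1 / (1 - a).
*)
theory Submission
  imports Defs
begin

section \<open>Principal values\<close>

lemma Hilbert_transform_eqI:
  assumes "has_Hilbert_transform f x v"
  shows "Hilbert_transform f x = v"
  unfolding Hilbert_transform_def
proof (rule the_equality)
  show "has_Hilbert_transform f x v" by fact
  fix w assume "has_Hilbert_transform f x w"
  then show "w = v"
    using assms unfolding has_Hilbert_transform_def
    by (auto intro: tendsto_unique[OF trivial_limit_at_right_real])
qed

lemma has_Hilbert_transformI:
  fixes f G :: "real \<Rightarrow> real"
  assumes "\<delta> > 0"
    and integrable: "\<And>\<epsilon>. 0 < \<epsilon> \<Longrightarrow> \<epsilon> < \<delta> \<Longrightarrow>
           set_integrable lborel {y. \<epsilon> < \<bar>x - y\<bar>} (\<lambda>y. f y / (x - y))"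
    and truncated: "\<And>\<epsilon>. 0 < \<epsilon> \<Longrightarrow> \<epsilon> < \<delta> \<Longrightarrow>
           (1 / pi) * (LINT y:{y. \<epsilon> < \<bar>x - y\<bar>}|lborel. f y / (x - y)) = G \<epsilon>"
    and "(G \<longlongrightarrow> v) (at_right 0)"
  shows "has_Hilbert_transform f x v"
  unfolding has_Hilbert_transform_def
proof safe
  fix \<epsilon> :: real assume "0 < \<epsilon>"
  show "set_integrable lborel {y. \<epsilon> < \<bar>x - y\<bar>} (\<lambda>y. f y / (x - y))"
  proof (rule set_integrable_subset)
    show "set_integrable lborel {y. min \<epsilon> (\<delta>/2) < \<bar>x - y\<bar>} (\<lambda>y. f y / (x - y))"
      using \<open>0 < \<epsilon>\<close> \<open>\<delta> > 0\<close> by (intro integrable) auto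
  qed auto
next
  have "eventually (\<lambda>\<epsilon>. G \<epsilon> = (1 / pi) * (LINT y:{y. \<epsilon> < \<bar>x - y\<bar>}|lborel. f y / (x - y))) (at_right 0)"
    by (rule eventually_at_rightI[of 0 \<delta>]) (use \<open>\<delta> > 0\<close> truncated in auto)
  with assms(4) show "((\<lambda>\<epsilon>. (1 / pi) * (LINT y:{y. \<epsilon> < \<bar>x - y\<bar>}|lborel. f y / (x - y))) \<longlongrightarrow> v) (at_right 0)"
    by (rule tendsto_cong[THEN iffD1, rotated])
qed

section \<open>Beta and digamma integrals\<close>

lemma interval_integral_powr_0_1:
  fixes a :: real
  assumes "a > 0"
  shows "set_integrable lborel (einterval 0 1) (\<lambda>u. u powr (a - 1))"
    and "(LBINT u=0..1. u powr (a - 1)) = 1 / a"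
proof -
  let ?F = "\<lambda>u::real. u powr a / a"
  have "(?F has_real_derivative u powr (a - 1)) (at u)" if "0 < u" for u
    using that assms by (auto intro!: derivative_eq_intros simp: field_simps powr_diff)
  moreover have "isCont (\<lambda>u. u powr (a - 1)) u" if "0 < u" for u
    using that by (auto intro!: continuous_intros)
  moreover have "((?F \<circ> real_of_ereal) \<longlongrightarrow> 0) (at_right (ereal 0))"
    unfolding ereal_tendsto_simps1
    using assms by (auto intro!: tendsto_eq_intros tendsto_zero_powrI eventually_at_rightI[of 0 1])
  moreover have "((?F \<circ> real_of_ereal) \<longlongrightarrow> 1 / a) (at_left (ereal 1))"
    unfolding ereal_tendsto_simps1 using assms by (auto intro!: tendsto_eq_intros)
  ultimately show "set_integrable lborel (einterval 0 1) (\<lambda>u. u powr (a - 1))"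
    and "(LBINT u=0..1. u powr (a - 1)) = 1 / a"
    using interval_integral_FTC_nonneg[where a=0 and b=1 and F="?F" and f="\<lambda>u. u powr (a - 1)"]
    by (auto simp: zero_ereal_def one_ereal_def)
qed

lemma set_integrable_powr_div_one_minus:
  fixes p r :: real
  assumes "p > 0" and "r < 1"
  shows "set_integrable lborel (einterval 0 r) (\<lambda>u. u powr (p - 1) / (1 - u))"
proof (rule set_integrable_bound)
  have "set_integrable lborel (einterval 0 r) (\<lambda>u. u powr (p - 1))"
    by (rule set_integrable_subset[OF interval_integral_powr_0_1(1)[OF \<open>p > 0\<close>]])
      (use \<open>r < 1\<close> in \<open>auto simp: einterval_iff\<close>)
  then show "set_integrable lborel (einterval 0 r) (\<lambda>u. u powr (p - 1) / (1 - r))"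
    by simp
  show "set_borel_measurable lborel (einterval 0 r) (\<lambda>u. u powr (p - 1) / (1 - u))"
    unfolding set_borel_measurable_def by measurable
  show "AE u in lborel. u \<in> einterval 0 r \<longrightarrow>
          norm (u powr (p - 1) / (1 - u)) \<le> norm (u powr (p - 1) / (1 - r))"
    using \<open>r < 1\<close> by (auto simp: einterval_iff divide_simps intro!: mult_left_mono)
qed

(* No hypothesis is needed: at the poles both sides are 0, since Gamma vanishes at the
   non-positive integers and x / 0 = 0. *)
lemma Gamma_reflection_real:
  fixes x :: real
  shows "Gamma x * Gamma (1 - x) = pi / sin (pi * x)"
proof -
  have "complex_of_real (Gamma x * Gamma (1 - x)) = Gamma (of_real x) * Gamma (1 - of_real x)"
    using Gamma_complex_of_real[of "1 - x"] by (simp add: Gamma_complex_of_real)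
  also have "\<dots> = complex_of_real (pi / sin (pi * x))"
    by (simp add: Gamma_reflection_complex flip: sin_of_real)
  finally show ?thesis by (simp only: of_real_eq_iff)
qed

lemma interval_integral_Beta_reflection:
  fixes m :: real
  assumes "0 < m" "m < 1"
  shows "set_integrable lborel (einterval 0 1) (\<lambda>v. v powr (-m) * (1 - v) powr (m - 1))"
    and "(LBINT v=0..1. v powr (-m) * (1 - v) powr (m - 1)) = pi / sin (pi * m)"
proof -
  have Beta: "set_integrable lborel {0..1} (\<lambda>v. v powr ((1 - m) - 1) * (1 - v) powr (m - 1))"
    using assms by (intro integrable_Beta) auto
  then have "set_integrable lborel (einterval 0 1) (\<lambda>v. v powr ((1 - m) - 1) * (1 - v) powr (m - 1))"
    by (rule set_integrable_subset) (auto simp: einterval_iff)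
  then show "set_integrable lborel (einterval 0 1) (\<lambda>v. v powr (-m) * (1 - v) powr (m - 1))"
    by simp
  have "(LBINT v=0..1. v powr (-m) * (1 - v) powr (m - 1))
          = (LBINT v:{0..1}. v powr ((1 - m) - 1) * (1 - v) powr (m - 1))"
    by (subst interval_integral_Icc[symmetric]) (simp_all add: zero_ereal_def one_ereal_def)
  also have "\<dots> = integral {0..1} (\<lambda>v. v powr ((1 - m) - 1) * (1 - v) powr (m - 1))"
    by (rule set_borel_integral_eq_integral(2)[OF Beta])
  also have "\<dots> = Beta (1 - m) m"
    using assms by (intro integral_unique has_integral_Beta_real) auto
  also have "\<dots> = pi / sin (pi * m)"
    by (simp add: Beta_def Gamma_reflection_real mult.commute)
  finally show "(LBINT v=0..1. v powr (-m) * (1 - v) powr (m - 1)) = pi / sin (pi * m)" .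
qed

lemma Digamma_diff_sums:
  fixes a b :: real
  assumes "a > 0" "b > 0"
  shows "(\<lambda>k. inverse (a + real k) - inverse (b + real k)) sums (Digamma b - Digamma a)"
proof -
  have "(\<lambda>k. inverse (real (Suc k)) - inverse (c + real k)) sums (Digamma c + euler_mascheroni)"
    if "c > 0" for c :: real
    using summable_Digamma[of c] that by (simp add: Digamma_def summable_sums)
  from sums_diff[OF this[OF \<open>b > 0\<close>] this[OF \<open>a > 0\<close>]] show ?thesis by simp
qed

lemma set_integral_power_mult_powr_diff_0_1:
  fixes a b :: real
  assumes "a > 0" "b > 0"
  shows "set_integrable lborel {0<..<1} (\<lambda>u. u ^ n * (u powr (a - 1) - u powr (b - 1)))"
    and "(LINT u:{0<..<1}|lborel. u ^ n * (u powr (a - 1) - u powr (b - 1)))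
           = inverse (a + n) - inverse (b + n)"
proof -
  have I: "einterval 0 1 = {0<..<1::real}" by (auto simp: einterval_iff)
  have integral_0_1: "(LBINT u=0..1. h u) = (LINT u:{0<..<1}|lborel. h u)" for h :: "real \<Rightarrow> real"
    by (simp add: interval_lebesgue_integral_le_eq I)
  have "a + n > 0" "b + n > 0" using assms by auto
  note A = interval_integral_powr_0_1[OF \<open>a + n > 0\<close>, unfolded integral_0_1 I]
  note B = interval_integral_powr_0_1[OF \<open>b + n > 0\<close>, unfolded integral_0_1 I]
  have eq: "u ^ n * (u powr (a - 1) - u powr (b - 1)) = u powr ((a + n) - 1) - u powr ((b + n) - 1)"
    if "u \<in> {0<..<1}" for u :: real
    using that by (simp add: powr_add powr_realpow right_diff_distrib powr_diff mult_ac)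
  show "set_integrable lborel {0<..<1} (\<lambda>u. u ^ n * (u powr (a - 1) - u powr (b - 1)))"
    by (rule iffD2[OF set_integrable_cong[OF refl refl eq] set_integral_diff(1)[OF A(1) B(1)]])
  have "(LINT u:{0<..<1}|lborel. u ^ n * (u powr (a - 1) - u powr (b - 1)))
          = (LINT u:{0<..<1}|lborel. u powr ((a + n) - 1) - u powr ((b + n) - 1))"
    by (rule set_lebesgue_integral_cong) (simp_all add: eq)
  also have "\<dots> = inverse (a + n) - inverse (b + n)"
    using set_integral_diff(2)[OF A(1) B(1)] A(2) B(2) by (simp add: divide_inverse)
  finally show "(LINT u:{0<..<1}|lborel. u ^ n * (u powr (a - 1) - u powr (b - 1)))
           = inverse (a + n) - inverse (b + n)" .
qed

lemma Digamma_diff_integral_le: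
  fixes a b :: real
  assumes "0 < a" "a \<le> b"
  shows "set_integrable lborel {0<..<1} (\<lambda>u. (u powr (a - 1) - u powr (b - 1)) / (1 - u))"
    and "(LINT u:{0<..<1}|lborel. (u powr (a - 1) - u powr (b - 1)) / (1 - u)) = Digamma b - Digamma a"
proof -
  define I where "I = {0<..<1::real}"
  define D where "D u = u powr (a - 1) - u powr (b - 1)" for u :: real
  define f where "f N u = (\<Sum>n<N. indicator I u * (u ^ n * D u))" for N u
  define g where "g = (\<lambda>u. indicator I u * (D u / (1 - u)))"
  note power_term = set_integral_power_mult_powr_diff_0_1[of a b, folded I_def D_def]
  have D_nonneg: "0 \<le> D u" if "u \<in> I" for u
    using that assms by (auto simp: D_def I_def intro!: powr_mono')
  have f_eq: "f N u = indicator I u * ((\<Sum>n<N. u ^ n) * D u)" for N u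
    by (simp add: f_def sum_distrib_left sum_distrib_right)
  have integrable: "integrable lborel (f N)" for N
    using power_term(1) assms unfolding f_def set_integrable_def
    by (intro Bochner_Integration.integrable_sum) simp
  have mono: "AE u in lborel. mono (\<lambda>N. f N u)"
  proof (intro AE_I2 monoI)
    fix u :: real and N M :: nat
    assume "N \<le> M"
    then have "u \<in> I \<Longrightarrow> (\<Sum>n<N. u ^ n) \<le> (\<Sum>n<M. u ^ n)"
      by (intro sum_mono2) (auto simp: I_def)
    then show "f N u \<le> f M u"
      using D_nonneg by (simp add: f_eq mult_right_mono split: split_indicator)
  qed
  have nonneg: "AE u in lborel. 0 \<le> f N u" for N
    using D_nonneg by (intro AE_I2) (auto simp: f_eq I_def intro!: mult_nonneg_nonneg sum_nonneg split: split_indicator)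
  have pointwise: "AE u in lborel. (\<lambda>N. f N u) \<longlonglongrightarrow> g u"
  proof (intro AE_I2)
    fix u :: real
    show "(\<lambda>N. f N u) \<longlonglongrightarrow> g u"
    proof (cases "u \<in> I")
      case True
      then have "(\<lambda>N. \<Sum>n<N. u ^ n) \<longlonglongrightarrow> 1 / (1 - u)"
        using geometric_sums[of u] by (simp add: I_def sums_def)
      then show ?thesis
        using True by (auto simp: f_eq g_def intro!: tendsto_eq_intros)
    qed (simp add: f_eq g_def)
  qed
  have "integral\<^sup>L lborel (f N) = (\<Sum>n<N. inverse (a + real n) - inverse (b + real n))" for N
    using power_term assms unfolding f_def set_integrable_def set_lebesgue_integral_def
    by (subst Bochner_Integration.integral_sum) auto
  then have integrals: "(\<lambda>N. integral\<^sup>L lborel (f N)) \<longlonglongrightarrow> Digamma b - Digamma a"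
    using Digamma_diff_sums[of a b] assms by (simp add: sums_def)
  have "g \<in> borel_measurable lborel"
    unfolding g_def D_def I_def by measurable
  from integral_monotone_convergence_nonneg[OF integrable mono nonneg pointwise integrals this]
  show "set_integrable lborel {0<..<1} (\<lambda>u. (u powr (a - 1) - u powr (b - 1)) / (1 - u))"
    and "(LINT u:{0<..<1}|lborel. (u powr (a - 1) - u powr (b - 1)) / (1 - u)) = Digamma b - Digamma a"
    by (simp_all add: g_def D_def I_def set_integrable_def set_lebesgue_integral_def)
qed

lemma Digamma_diff_integral:
  fixes a b :: real
  assumes "a > 0" "b > 0"
  shows "set_integrable lborel {0<..<1} (\<lambda>u. (u powr (a - 1) - u powr (b - 1)) / (1 - u))"
    and "(LINT u:{0<..<1}|lborel. (u powr (a - 1) - u powr (b - 1)) / (1 - u)) = Digamma b - Digamma a"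
proof -
  have "set_integrable lborel {0<..<1} (\<lambda>u. (u powr (a - 1) - u powr (b - 1)) / (1 - u)) \<and>
        (LINT u:{0<..<1}|lborel. (u powr (a - 1) - u powr (b - 1)) / (1 - u)) = Digamma b - Digamma a"
  proof (cases "a \<le> b")
    case True
    then show ?thesis using Digamma_diff_integral_le assms by blast
  next
    case False
    note swapped = Digamma_diff_integral_le[of b a]
    have "(\<lambda>u. (u powr (a - 1) - u powr (b - 1)) / (1 - u)) = (\<lambda>u. - ((u powr (b - 1) - u powr (a - 1)) / (1 - u)))"
      by (simp add: fun_eq_iff diff_divide_distrib)
    then show ?thesis
      using swapped False assms by (simp add: set_integral_uminus set_integrable_def)
  qed
  then show "set_integrable lborel {0<..<1} (\<lambda>u. (u powr (a - 1) - u powr (b - 1)) / (1 - u))"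
    and "(LINT u:{0<..<1}|lborel. (u powr (a - 1) - u powr (b - 1)) / (1 - u)) = Digamma b - Digamma a"
    by auto
qed

lemma Digamma_reflection_real:
  fixes x :: real
  assumes "0 < x" "x < 1"
  shows "Digamma (1 - x) - Digamma x = pi * cot (pi * x)"
proof -
  define L where "L y = ln_Gamma y + ln_Gamma (1 - y)" for y :: real
  define R where "R y = ln pi - ln (sin (pi * y))" for y :: real
  have sin_pos: "sin (pi * y) > 0" if "0 < y" "y < 1" for y
    using that by (intro sin_gt_zero) auto
  have "L y = R y" if "0 < y" "y < 1" for y
  proof -
    have "L y = ln (Gamma y * Gamma (1 - y))"
      using that by (simp add: L_def ln_Gamma_real_pos ln_mult_pos)
    also have "\<dots> = R y"
      using that sin_pos[OF that] by (simp add: Gamma_reflection_real R_def ln_div)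
    finally show ?thesis .
  qed
  then have "eventually (\<lambda>y. L y = R y) (nhds x)"
    using eventually_nhds_in_open[of "{0<..<1}" x] assms by (auto elim!: eventually_mono)
  moreover have "(L has_real_derivative Digamma x - Digamma (1 - x)) (at x)"
    unfolding L_def using assms by (auto intro!: derivative_eq_intros)
  ultimately have "(R has_real_derivative Digamma x - Digamma (1 - x)) (at x)"
    by (subst (asm) DERIV_cong_ev[OF refl _ refl])
  moreover have "(R has_real_derivative - pi * cot (pi * x)) (at x)"
    unfolding R_def cot_def using assms sin_pos[OF assms]
    by (auto intro!: derivative_eq_intros simp: field_simps)
  ultimately have "Digamma x - Digamma (1 - x) = - pi * cot (pi * x)"
    by (rule DERIV_unique)
  then show ?thesis by linarith
qed

section \<open>Substitutions in the truncated integrals\<close>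

lemma interval_integral_substitution_nonneg_on_open:
  fixes f g g' :: "real \<Rightarrow> real" and a b A :: real and B :: ereal
  assumes "a < b" and "open S" and "continuous_on S f" and "\<And>y. y \<in> S \<Longrightarrow> 0 \<le> f y"
    and g: "\<And>x. a < x \<Longrightarrow> x < b \<Longrightarrow> g x \<in> S \<and> (g has_real_derivative g' x) (at x) \<and> isCont g' x"
    and "\<And>x. 0 \<le> g' x"
    and "(g \<longlongrightarrow> A) (at_right a)"
    and "((\<lambda>x. ereal (g x)) \<longlongrightarrow> B) (at_left b)"
    and "set_integrable lborel (einterval a b) (\<lambda>x. f (g x) * g' x)"
  shows "set_integrable lborel (einterval A B) f"
    and "(LBINT y=A..B. f y) = (LBINT x=a..b. f (g x) * g' x)"
proof -
  have "isCont f (g x)" if "a < x" "x < b" for x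
    using assms(2,3) g[OF that] continuous_on_eq_continuous_at by blast
  moreover have "((ereal \<circ> g \<circ> real_of_ereal) \<longlongrightarrow> ereal A) (at_right (ereal a))"
    using assms(7) unfolding o_assoc[symmetric] ereal_tendsto_simps1 ereal_tendsto_simps2 .
  moreover have "((ereal \<circ> g \<circ> real_of_ereal) \<longlongrightarrow> B) (at_left (ereal b))"
    using assms(8) unfolding ereal_tendsto_simps1 by (simp add: o_def)
  ultimately show "set_integrable lborel (einterval A B) f"
    and "(LBINT y=A..B. f y) = (LBINT x=a..b. f (g x) * g' x)"
    using interval_integral_substitution_nonneg[of "ereal a" "ereal b" g g' f] assms(1,4,6,9) g
    by auto
qed

lemma powr_Beta_substitution:
  fixes m s v :: real
  assumes "0 < s" "0 < v" "v < 1"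
  shows "inverse ((s * v / (1 - v)) powr m * (s / (1 - v))) * (s / (1 - v)\<^sup>2)
           = s powr (-m) * (v powr (-m) * (1 - v) powr (m - 1))"
proof -
  have "W / (P * V) * (w / s) * (s / w\<^sup>2) = inverse P * (inverse V * (W / w))"
    if "0 < P" "0 < V" "0 < w" for P V W w :: real
    using that assms by (simp add: field_simps power2_eq_square)
  then have "inverse ((s * v / (1 - v)) powr m * (s / (1 - v))) * (s / (1 - v)\<^sup>2)
               = inverse (s powr m) * (inverse (v powr m) * ((1 - v) powr m / (1 - v)))"
    using assms by (simp add: powr_divide powr_mult)
  with assms show ?thesis
    by (simp add: powr_minus powr_diff)
qed

lemma powr_inversion_substitution:
  fixes m s w :: real
  assumes "0 < s" "0 < w" "w < 1"
  shows "inverse ((s / w) powr m * (s * (1 - w) / w)) * (s / w\<^sup>2) = s powr (-m) * (w powr (m - 1) / (1 - w))"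
proof -
  have "inverse ((s / w) powr m * (s * (1 - w) / w)) * (s / w\<^sup>2) = s powr (-m) * (w powr m / w / (1 - w))"
    using assms by (simp add: powr_divide powr_minus field_simps power2_eq_square)
  with assms show ?thesis
    by (simp add: powr_diff)
qed

lemma Stieltjes_integral_powr:
  fixes m s :: real
  assumes m: "0 < m" "m < 1" and s: "0 < s"
  defines "f \<equiv> \<lambda>y. inverse ((y - 1) powr m * (y - 1 + s))"
  shows "set_integrable lborel (einterval 1 \<infinity>) f"
    and "(LBINT y=1..\<infinity>. f y) = s powr (-m) * (pi / sin (pi * m))"
proof -
  define g where "g v = 1 + s * v / (1 - v)" for v :: real
  define g' where "g' v = s / (1 - v)\<^sup>2" for v :: real
  have fg: "f (g v) * g' v = s powr (-m) * (v powr (-m) * (1 - v) powr (m - 1))"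
    if "v \<in> einterval 0 1" for v
  proof -
    have v: "0 < v" "v < 1" using that by (auto simp: einterval_iff)
    then have "g v - 1 = s * v / (1 - v)" "s * v / (1 - v) + s = s / (1 - v)"
      by (simp_all add: g_def field_simps)
    then show ?thesis
      unfolding f_def g'_def by (simp only: powr_Beta_substitution[OF s v])
  qed
  note Beta = interval_integral_Beta_reflection[OF m]
  have integrable: "set_integrable lborel (einterval 0 1) (\<lambda>v. f (g v) * g' v)"
    by (rule iffD2[OF set_integrable_cong[OF refl refl fg] set_integrable_mult_right[OF Beta(1)]])
  have "(LBINT v=0..1. f (g v) * g' v) = (LBINT v=0..1. s powr (-m) * (v powr (-m) * (1 - v) powr (m - 1)))"
    by (rule interval_integral_cong) (use fg in \<open>auto simp: zero_ereal_def one_ereal_def\<close>)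
  also have "\<dots> = s powr (-m) * (pi / sin (pi * m))"
    using Beta(2) by simp
  finally have substituted: "(LBINT v=0..1. f (g v) * g' v) = s powr (-m) * (pi / sin (pi * m))" .
  have lim_0: "(g \<longlongrightarrow> 1) (at_right 0)"
    unfolding g_def by (auto intro!: tendsto_eq_intros)
  have "filterlim g at_top (at_left 1)"
    unfolding g_def using s by real_asymp
  then have lim_1: "((\<lambda>v. ereal (g v)) \<longlongrightarrow> \<infinity>) (at_left 1)"
    by (simp add: ereal_tendsto_simps2(2)[unfolded o_def])
  have "g x \<in> {1<..} \<and> (g has_real_derivative g' x) (at x) \<and> isCont g' x"
    if x: "0 < x" "x < 1" for x
  proof -
    have "(g has_real_derivative g' x) (at x)"
      using x unfolding g_def g'_def by (auto intro!: derivative_eq_intros simp: field_simps power2_eq_square)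
    moreover have "isCont g' x"
      using x unfolding g'_def by (auto intro!: continuous_intros)
    ultimately show ?thesis
      using x s by (simp add: g_def)
  qed
  moreover have "continuous_on {1<..} f"
    unfolding f_def using s by (intro continuous_intros) auto
  moreover have "0 \<le> f y" if "y \<in> {1<..}" for y
    using that s by (simp add: f_def)
  moreover have "0 \<le> g' x" for x
    using s by (simp add: g'_def)
  ultimately have "set_integrable lborel (einterval 1 \<infinity>) f"
    and "(LBINT y=1..\<infinity>. f y) = (LBINT v=0..1. f (g v) * g' v)"
    using interval_integral_substitution_nonneg_on_open[where S="{1<..}" and f=f and g'=g', OF _ _ _ _ _ _ lim_0 lim_1]
      integrable by (simp_all add: zero_ereal_def one_ereal_def)
  with substituted show "set_integrable lborel (einterval 1 \<infinity>) f"
    and "(LBINT y=1..\<infinity>. f y) = s powr (-m) * (pi / sin (pi * m))"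
    by auto
qed

lemma truncated_integral_below_singularity:
  fixes m s r :: real
  assumes m: "m < 1" and s: "0 < s" and r: "0 < r" "r < 1"
  defines "f \<equiv> \<lambda>y. inverse ((y - 1) powr m * (1 + s - y))"
  shows "set_integrable lborel (einterval 1 (ereal (1 + s * r))) f"
    and "(LBINT y=1..ereal (1 + s * r). f y) = s powr (-m) * (LBINT u=0..ereal r. u powr (-m) / (1 - u))"
proof -
  define g where "g u = 1 + s * u" for u :: real
  have fg: "f (g u) * s = s powr (-m) * (u powr (-m) / (1 - u))" if "u \<in> einterval 0 r" for u
  proof -
    have u: "0 < u" "u < r" using that by (auto simp: einterval_iff)
    then have "f (g u) * s = inverse (s powr m * u powr m * (s * (1 - u))) * s"
      using s by (simp add: f_def g_def powr_mult algebra_simps)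
    also have "\<dots> = s powr (-m) * (u powr (-m) / (1 - u))"
      using s u r by (simp add: powr_minus field_simps)
    finally show ?thesis .
  qed
  have "set_integrable lborel (einterval 0 r) (\<lambda>u. u powr ((1 - m) - 1) / (1 - u))"
    using m r by (intro set_integrable_powr_div_one_minus) auto
  then have powr_integrable: "set_integrable lborel (einterval 0 r) (\<lambda>u. u powr (-m) / (1 - u))"
    by simp
  have integrable: "set_integrable lborel (einterval 0 r) (\<lambda>u. f (g u) * s)"
    by (rule iffD2[OF set_integrable_cong[OF refl refl fg] set_integrable_mult_right[OF powr_integrable]])
  have substituted: "(LBINT u=0..ereal r. f (g u) * s) = s powr (-m) * (LBINT u=0..ereal r. u powr (-m) / (1 - u))"
  proof -
    have "(LBINT u=0..ereal r. f (g u) * s) = (LBINT u=0..ereal r. s powr (-m) * (u powr (-m) / (1 - u)))"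
      by (rule interval_integral_cong) (use fg r in \<open>auto simp: min_def max_def zero_ereal_def\<close>)
    then show ?thesis by (simp only: interval_lebesgue_integral_mult_right)
  qed
  have lim_0: "(g \<longlongrightarrow> 1) (at_right 0)"
    unfolding g_def by (auto intro!: tendsto_eq_intros)
  have lim_r: "((\<lambda>u. ereal (g u)) \<longlongrightarrow> ereal (1 + s * r)) (at_left r)"
    unfolding g_def by (auto intro!: tendsto_eq_intros)
  have "g u \<in> {1<..<1 + s} \<and> (g has_real_derivative s) (at u) \<and> isCont (\<lambda>_. s) u"
    if "0 < u" "u < r" for u
    using that s r unfolding g_def by (auto intro!: derivative_eq_intros)
  moreover have "continuous_on {1<..<1 + s} f"
    unfolding f_def using s by (intro continuous_intros) auto
  moreover have "0 \<le> f y" if "y \<in> {1<..<1 + s}" for y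
    using that by (simp add: f_def)
  ultimately have "set_integrable lborel (einterval 1 (ereal (1 + s * r))) f"
    and "(LBINT y=1..ereal (1 + s * r). f y) = (LBINT u=0..ereal r. f (g u) * s)"
    using interval_integral_substitution_nonneg_on_open[where S="{1<..<1 + s}" and f=f and g'="\<lambda>_. s", OF _ _ _ _ _ _ lim_0 lim_r]
      integrable s r by (simp_all add: zero_ereal_def one_ereal_def)
  with substituted show "set_integrable lborel (einterval 1 (ereal (1 + s * r))) f"
    and "(LBINT y=1..ereal (1 + s * r). f y) = s powr (-m) * (LBINT u=0..ereal r. u powr (-m) / (1 - u))"
    by auto
qed

lemma truncated_integral_above_singularity:
  fixes m s q :: real
  assumes m: "0 < m" "m < 1" and s: "0 < s" and q: "0 < q" "q < 1"
  defines "f \<equiv> \<lambda>y. inverse ((y - 1) powr m * (y - 1 - s))"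
  shows "set_integrable lborel (einterval (ereal (1 + s / q)) \<infinity>) f"
    and "(LBINT y=ereal (1 + s / q)..\<infinity>. f y) = s powr (-m) * (LBINT w=0..ereal q. w powr (m - 1) / (1 - w))"
proof -
  define g where "g v = 1 - s / v" for v :: real
  define g' where "g' v = s / v\<^sup>2" for v :: real
  define F where "F v = s powr (-m) * ((-v) powr (m - 1) / (1 - (-v)))" for v :: real
  have fg: "f (g v) * g' v = F v" if "v \<in> einterval (ereal (-q)) 0" for v
  proof -
    define w where "w = -v"
    have w: "0 < w" "w < 1" using that q by (auto simp: w_def einterval_iff)
    then have "g v - 1 = s / w" "s / w - s = s * (1 - w) / w" "g' v = s / w\<^sup>2" "F v = s powr (-m) * (w powr (m - 1) / (1 - w))"
      by (auto simp: g_def g'_def F_def w_def field_simps)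
    then show ?thesis
      unfolding f_def by (simp only: powr_inversion_substitution[OF s w])
  qed
  have "set_integrable lborel (einterval 0 q) (\<lambda>w. w powr (m - 1) / (1 - w))"
    using m q by (intro set_integrable_powr_div_one_minus) auto
  then have "interval_lebesgue_integrable lborel (ereal (-q)) 0 (\<lambda>v. (-v) powr (m - 1) / (1 - (-v)))"
    using q by (subst interval_integrable_mirror) (simp add: interval_lebesgue_integrable_def)
  then have "set_integrable lborel (einterval (ereal (-q)) 0) F"
    using q unfolding F_def by (intro set_integrable_mult_right) (simp add: interval_lebesgue_integrable_def)
  then have integrable: "set_integrable lborel (einterval (ereal (-q)) 0) (\<lambda>v. f (g v) * g' v)"
    by (subst set_integrable_cong[OF refl refl fg])
  have "(LBINT v=ereal (-q)..0. f (g v) * g' v) = (LBINT v=ereal (-q)..0. F v)"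
    by (rule interval_integral_cong) (use fg q in \<open>auto simp: min_def max_def zero_ereal_def\<close>)
  also have "\<dots> = (LBINT w=0..ereal q. F (-w))"
    by (subst interval_integral_reflect) (simp add: zero_ereal_def)
  also have "\<dots> = s powr (-m) * (LBINT w=0..ereal q. w powr (m - 1) / (1 - w))"
    unfolding F_def minus_minus by (rule interval_lebesgue_integral_mult_right)
  finally have substituted: "(LBINT v=ereal (-q)..0. f (g v) * g' v)
      = s powr (-m) * (LBINT w=0..ereal q. w powr (m - 1) / (1 - w))" .
  have lim_q: "(g \<longlongrightarrow> 1 + s / q) (at_right (-q))"
    unfolding g_def using q by (auto intro!: tendsto_eq_intros)
  have "filterlim g at_top (at_left 0)"
    unfolding g_def using s by real_asymp
  then have lim_0: "((\<lambda>v. ereal (g v)) \<longlongrightarrow> \<infinity>) (at_left 0)"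
    by (simp add: ereal_tendsto_simps2(2)[unfolded o_def])
  have "g v \<in> {1 + s<..} \<and> (g has_real_derivative g' v) (at v) \<and> isCont g' v"
    if "-q < v" "v < 0" for v
  proof -
    have v: "-1 < v" "v < 0" using that q by auto
    have "s * (-v) < s * 1"
      using v s by (intro mult_strict_left_mono) auto
    then have "g v \<in> {1 + s<..}"
      using v s by (simp add: g_def field_simps)
    moreover have "(g has_real_derivative g' v) (at v)"
      using v unfolding g_def g'_def by (auto intro!: derivative_eq_intros simp: field_simps power2_eq_square)
    moreover have "isCont g' v"
      using v unfolding g'_def by (auto intro!: continuous_intros)
    ultimately show ?thesis by blast
  qed
  moreover have "continuous_on {1 + s<..} f"
    unfolding f_def using s by (intro continuous_intros) auto
  moreover have "0 \<le> f y" if "y \<in> {1 + s<..}" for y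
    using that s by (simp add: f_def)
  moreover have "0 \<le> g' v" for v
    using s by (simp add: g'_def)
  ultimately have "set_integrable lborel (einterval (ereal (1 + s / q)) \<infinity>) f"
    and "(LBINT y=ereal (1 + s / q)..\<infinity>. f y) = (LBINT v=ereal (-q)..0. f (g v) * g' v)"
    using interval_integral_substitution_nonneg_on_open[where S="{1 + s<..}" and f=f and g'=g', OF _ _ _ _ _ _ lim_q lim_0]
      integrable q by (simp_all add: zero_ereal_def)
  with substituted show "set_integrable lborel (einterval (ereal (1 + s / q)) \<infinity>) f"
    and "(LBINT y=ereal (1 + s / q)..\<infinity>. f y) = s powr (-m) * (LBINT w=0..ereal q. w powr (m - 1) / (1 - w))"
    by auto
qed

section \<open>The principal value at the singularity\<close>

lemma powr_div_one_minus_le: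
  fixes m d w :: real
  assumes "0 < m" "m < 1" "0 < d" "d \<le> 1" "1/2 \<le> w" "w \<le> 1 / (1 + d)"
  shows "w powr (m - 1) / (1 - w) \<le> 4 / d"
proof -
  have "w powr (m - 1) \<le> (1/2) powr (m - 1)"
    using assms by (intro powr_mono2') auto
  also have "\<dots> = 2 powr (1 - m)"
  proof -
    have "(1/2::real) powr (m - 1) = 1 / 2 powr (m - 1)" "(2::real) powr (1 - m) = 1 / 2 powr (m - 1)"
      by (simp_all add: powr_divide powr_diff)
    then show ?thesis by (simp only:)
  qed
  also have "\<dots> \<le> 2 powr 1"
    using assms by (intro powr_mono) auto
  finally have numerator: "w powr (m - 1) \<le> 2" by simp
  have "d / 2 \<le> d / (1 + d)"
    using assms by (intro divide_left_mono) auto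
  also have "\<dots> \<le> 1 - w"
    using assms by (simp add: field_simps)
  finally have gap: "d / 2 \<le> 1 - w" .
  then have "1 / (1 - w) \<le> 1 / (d / 2)"
    using assms by (intro divide_left_mono) auto
  then have "1 / (1 - w) \<le> 2 / d"
    by simp
  with numerator have "w powr (m - 1) * (1 / (1 - w)) \<le> 2 * (2 / d)"
    using assms gap by (intro mult_mono) auto
  then show ?thesis by simp
qed

lemma interval_integral_powr_div_one_minus_near_one:
  fixes m d :: real
  assumes m: "0 < m" "m < 1" and d: "0 < d" "d \<le> 1/2"
  shows "\<bar>LBINT w=ereal (1 - d)..ereal (1 / (1 + d)). w powr (m - 1) / (1 - w)\<bar> \<le> 4 * d"
proof -
  define r where "r = 1 - d"
  define q where "q = 1 / (1 + d)"
  define F where "F w = w powr (m - 1) / (1 - w)" for w :: real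
  have rq: "1/2 \<le> r" "r < q" "q < 1"
    using d by (auto simp: r_def q_def field_simps)
  have length: "q - r = d * d / (1 + d)"
    using d by (simp add: r_def q_def field_simps)
  have "continuous_on {r..q} F"
    unfolding F_def using rq by (intro continuous_intros) auto
  then have integrable: "set_integrable lborel (einterval r q) F"
    by (rule set_integrable_subset[OF borel_integrable_atLeastAtMost']) (auto simp: einterval_iff)
  have bounds: "0 \<le> F w \<and> F w \<le> 4 / d" if "w \<in> einterval r q" for w
  proof -
    have w: "r < w" "w < q" using that by (auto simp: einterval_iff)
    then have "0 \<le> F w" using rq by (simp add: F_def)
    moreover have "F w \<le> 4 / d"
      using w rq m d unfolding F_def q_def by (intro powr_div_one_minus_le) auto
    ultimately show ?thesis ..
  qed
  have const: "set_integrable lborel (einterval r q) (\<lambda>_. 4 / d)"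
    using interval_integral_const(1)[of r q "4 / d"] rq by (simp add: interval_lebesgue_integrable_def)
  have integral_eq: "(LBINT w=ereal r..ereal q. h w) = (LINT w:einterval r q|lborel. h w)" for h
    using rq by (simp add: interval_lebesgue_integral_le_eq)
  have "(LINT w:einterval r q|lborel. F w) \<le> (LINT w:einterval r q|lborel. 4 / d)"
    using bounds by (intro set_integral_mono integrable const) auto
  also have "\<dots> = 4 / d * (q - r)"
    using interval_integral_const(2)[of r q "4 / d"] by (simp only: integral_eq)
  also have "\<dots> \<le> 4 * d"
    using d by (simp add: length field_simps)
  finally have upper: "(LINT w:einterval r q|lborel. F w) \<le> 4 * d" .
  have "0 \<le> (LINT w:einterval r q|lborel. F w)"
    using set_integral_mono[OF _ integrable, of "\<lambda>_. 0"] bounds by (simp add: set_integrable_def)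
  with upper show ?thesis
    by (simp add: integral_eq F_def flip: r_def q_def)
qed

lemma tendsto_interval_integral_powr_reflection:
  fixes m :: real
  assumes "0 < m" "m < 1"
  shows "((\<lambda>r. LBINT u=0..ereal r. (u powr (-m) - u powr (m - 1)) / (1 - u)) \<longlongrightarrow> - pi * cot (pi * m))
           (at_left 1)"
proof -
  define h where "h = (\<lambda>u::real. (u powr (-m) - u powr (m - 1)) / (1 - u))"
  have "set_integrable lborel {0<..<1} h" "(LINT u:{0<..<1}|lborel. h u) = Digamma m - Digamma (1 - m)"
    using Digamma_diff_integral[of "1 - m" m] assms unfolding h_def by simp_all
  moreover have "(\<lambda>u. indicator {0..<1} u * h u) = (\<lambda>u. indicator {0<..<1} u * h u)"
    by (auto simp: fun_eq_iff h_def split: split_indicator)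
  ultimately have "set_integrable lborel {0..<1} h" "(LINT u:{0..<1}|lborel. h u) = - pi * cot (pi * m)"
    using Digamma_reflection_real[OF assms]
    by (simp_all add: set_integrable_def set_lebesgue_integral_def)
  then have "((\<lambda>r. LINT u:{0..r}|lborel. h u) \<longlongrightarrow> - pi * cot (pi * m)) (at_left 1)"
    using tendsto_set_lebesgue_integral_at_left[of 0 1 lborel h] by simp
  moreover have "eventually (\<lambda>r. (LINT u:{0..r}|lborel. h u) = (LBINT u=0..ereal r. h u)) (at_left 1)"
    by (rule eventually_at_leftI[of 0]) (auto simp: interval_integral_Icc zero_ereal_def)
  ultimately show ?thesis
    unfolding h_def by (rule tendsto_cong[THEN iffD1, rotated])
qed

(* The integral of u powr (-m) / (1 - u) over (0, oo) minus (1 - t, 1 + t), with the part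
   beyond 1 + t mapped onto (0, 1 / (1 + t)) by u |-> 1 / u. *)
definition pv_powr_truncated :: "real \<Rightarrow> real \<Rightarrow> real" where
  "pv_powr_truncated m t = (LBINT u=0..ereal (1 - t). u powr (-m) / (1 - u))
      - (LBINT w=0..ereal (1 / (1 + t)). w powr (m - 1) / (1 - w))"

lemma pv_powr_truncated_eq:
  fixes m t :: real
  assumes m: "0 < m" "m < 1" and t: "0 < t" "t < 1"
  shows "pv_powr_truncated m t = (LBINT u=0..ereal (1 - t). (u powr (-m) - u powr (m - 1)) / (1 - u))
            - (LBINT w=ereal (1 - t)..ereal (1 / (1 + t)). w powr (m - 1) / (1 - w))"
proof -
  define r where "r = 1 - t"
  define q where "q = 1 / (1 + t)"
  have rq: "0 < r" "r < q" "q < 1"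
    using t by (auto simp: r_def q_def field_simps)
  have "set_integrable lborel (einterval 0 r) (\<lambda>u. u powr ((1 - m) - 1) / (1 - u))"
    using m rq by (intro set_integrable_powr_div_one_minus) auto
  then have P: "interval_lebesgue_integrable lborel 0 r (\<lambda>u. u powr (-m) / (1 - u))"
    using rq by (simp add: interval_lebesgue_integrable_def)
  have Q: "interval_lebesgue_integrable lborel 0 (ereal c) (\<lambda>u. u powr (m - 1) / (1 - u))"
    if "0 < c" "c < 1" for c :: real
    using set_integrable_powr_div_one_minus[of m c] m that by (simp add: interval_lebesgue_integrable_def)
  have "(LBINT u=0..ereal r. u powr (-m) / (1 - u)) - (LBINT u=0..ereal r. u powr (m - 1) / (1 - u))
          = (LBINT u=0..ereal r. (u powr (-m) - u powr (m - 1)) / (1 - u))"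
    using interval_lebesgue_integral_diff(2)[OF P Q[of r]] rq by (simp add: diff_divide_distrib)
  moreover have "(LBINT u=0..ereal r. u powr (m - 1) / (1 - u)) + (LBINT u=ereal r..ereal q. u powr (m - 1) / (1 - u))
          = (LBINT u=0..ereal q. u powr (m - 1) / (1 - u))"
    using Q[of q] rq
    by (intro interval_integral_sum) (auto simp: interval_lebesgue_integrable_def min_def max_def zero_ereal_def)
  ultimately show ?thesis
    unfolding pv_powr_truncated_def by (simp flip: r_def q_def)
qed

lemma pv_powr_truncated_limit:
  fixes m :: real
  assumes m: "0 < m" "m < 1"
  shows "(pv_powr_truncated m \<longlongrightarrow> - pi * cot (pi * m)) (at_right 0)"
proof -
  define E where "E t = (LBINT w=ereal (1 - t)..ereal (1 / (1 + t)). w powr (m - 1) / (1 - w))" for t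
  have "filterlim (\<lambda>t::real. 1 - t) (at_left 1) (at_right 0)"
    by real_asymp
  from filterlim_compose[OF tendsto_interval_integral_powr_reflection[OF m] this]
  have main: "((\<lambda>t. LBINT u=0..ereal (1 - t). (u powr (-m) - u powr (m - 1)) / (1 - u))
                \<longlongrightarrow> - pi * cot (pi * m)) (at_right 0)" .
  have "(E \<longlongrightarrow> 0) (at_right 0)"
  proof (rule Lim_null_comparison)
    show "eventually (\<lambda>t. norm (E t) \<le> 4 * t) (at_right 0)"
      using interval_integral_powr_div_one_minus_near_one[OF m]
      by (auto simp: E_def intro!: eventually_at_rightI[of 0 "1/2"])
  qed (auto intro!: tendsto_eq_intros)
  with main have "((\<lambda>t. (LBINT u=0..ereal (1 - t). (u powr (-m) - u powr (m - 1)) / (1 - u)) - E t)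
                    \<longlongrightarrow> - pi * cot (pi * m) - 0) (at_right 0)"
    by (intro tendsto_diff)
  moreover have "eventually (\<lambda>t. (LBINT u=0..ereal (1 - t). (u powr (-m) - u powr (m - 1)) / (1 - u)) - E t
                    = pv_powr_truncated m t) (at_right 0)"
    using pv_powr_truncated_eq[OF m] by (auto simp: E_def intro!: eventually_at_rightI[of 0 1])
  ultimately show ?thesis
    by (simp add: tendsto_cong)
qed

section \<open>The Hilbert transform of the profile\<close>

definition Omega_bar :: "real \<Rightarrow> real \<Rightarrow> real" where
  "Omega_bar m X = - sin (pi * m) * indicator {Y. Y > 1} X / \<bar>1 - X\<bar> powr m"

definition H_Omega_bar :: "real \<Rightarrow> real \<Rightarrow> real" where
  "H_Omega_bar m X = (indicator {Y. Y < 1} X + indicator {Y. Y > 1} X * cos (pi * m)) / \<bar>1 - X\<bar> powr m"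

lemma has_Hilbert_transform_Omega_bar_left:
  fixes m x :: real
  assumes m: "0 < m" "m < 1" and x: "x < 1"
  shows "has_Hilbert_transform (Omega_bar m) x (1 / (1 - x) powr m)"
proof -
  define S where "S = sin (pi * m)"
  have "S > 0"
    unfolding S_def using m by (intro sin_gt_zero) auto
  define f where "f y = inverse ((y - 1) powr m * (y - 1 + (1 - x)))" for y
  note Stieltjes = Stieltjes_integral_powr[OF m, of "1 - x", folded f_def]
  define G where "G = (\<lambda>y. S * (indicator {1<..} y * f y))"
  have "einterval 1 \<infinity> = {1::real<..}"
    by (auto simp: einterval_iff)
  with Stieltjes x \<open>S > 0\<close> have "integrable lborel G" "integral\<^sup>L lborel G = pi * (1 - x) powr (-m)"
    by (simp_all add: G_def S_def set_integrable_def interval_lebesgue_integral_le_eq set_lebesgue_integral_def)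
  moreover have truncate: "indicator {y. \<epsilon> < \<bar>x - y\<bar>} y * (Omega_bar m y / (x - y)) = G y"
    if "0 < \<epsilon>" "\<epsilon> < 1 - x" for \<epsilon> y
    using that \<open>S > 0\<close>
    by (auto simp: Omega_bar_def G_def f_def S_def field_simps split: split_indicator)
  ultimately show ?thesis
    using x \<open>S > 0\<close>
    by (intro has_Hilbert_transformI[where \<delta>="1 - x" and G="\<lambda>_. 1 / (1 - x) powr m"])
      (auto simp: set_integrable_def set_lebesgue_integral_def truncate powr_minus field_simps)
qed

lemma truncated_Hilbert_kernel_Omega_bar_right:
  fixes m x \<epsilon> y :: real
  assumes "1 < x" "0 < \<epsilon>"
  shows "indicator {y. \<epsilon> < \<bar>x - y\<bar>} y * (Omega_bar m y / (x - y))
           = sin (pi * m) * (indicator (einterval (ereal (x + \<epsilon>)) \<infinity>) y * inverse ((y - 1) powr m * (y - x)))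
             - sin (pi * m) * (indicator (einterval 1 (ereal (x - \<epsilon>))) y * inverse ((y - 1) powr m * (x - y)))"
proof -
  consider "y \<le> 1" | "1 < y" "y < x - \<epsilon>" | "x - \<epsilon> \<le> y" "y \<le> x + \<epsilon>" | "x + \<epsilon> < y"
    by linarith
  then show ?thesis
  proof cases
    case 2
    then have "(y - 1) powr m > 0" by auto
    with 2 assms show ?thesis
      by (auto simp: Omega_bar_def einterval_iff field_simps split: split_indicator)
  next
    case 4
    then have "(y - 1) powr m > 0" using assms by auto
    with 4 assms show ?thesis
      by (auto simp: Omega_bar_def einterval_iff field_simps split: split_indicator)
  qed (use assms in \<open>auto simp: Omega_bar_def einterval_iff split: split_indicator\<close>)
qed

lemma truncated_Hilbert_integral_Omega_bar_right:
  fixes m x \<epsilon> :: real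
  assumes m: "0 < m" "m < 1" and x: "1 < x" and \<epsilon>: "0 < \<epsilon>" "\<epsilon> < x - 1"
  shows "set_integrable lborel {y. \<epsilon> < \<bar>x - y\<bar>} (\<lambda>y. Omega_bar m y / (x - y))"
    and "(LINT y:{y. \<epsilon> < \<bar>x - y\<bar>}|lborel. Omega_bar m y / (x - y))
           = - sin (pi * m) * (x - 1) powr (-m) * pv_powr_truncated m (\<epsilon> / (x - 1))"
proof -
  define s where "s = x - 1"
  define t where "t = \<epsilon> / s"
  define S where "S = sin (pi * m)"
  have s: "0 < s" and t: "0 < t" "t < 1"
    using x \<epsilon> by (auto simp: s_def t_def field_simps)
  have ends: "1 + s * (1 - t) = x - \<epsilon>" "1 + s / (1 / (1 + t)) = x + \<epsilon>"
    using s by (auto simp: s_def t_def field_simps)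
  define A where "A = einterval 1 (ereal (x - \<epsilon>))"
  define B where "B = einterval (ereal (x + \<epsilon>)) \<infinity>"
  define f1 where "f1 y = inverse ((y - 1) powr m * (x - y))" for y
  define f2 where "f2 y = inverse ((y - 1) powr m * (y - x))" for y
  have kernels: "(\<lambda>y. inverse ((y - 1) powr m * (1 + s - y))) = f1"
    "(\<lambda>y. inverse ((y - 1) powr m * (y - 1 - s))) = f2"
    by (simp_all add: fun_eq_iff f1_def f2_def s_def)
  note below = truncated_integral_below_singularity[OF m(2) s, of "1 - t", unfolded kernels ends, folded A_def]
  note above = truncated_integral_above_singularity[OF m s, of "1 / (1 + t)", unfolded kernels ends, folded B_def]
  have split: "(\<lambda>y. indicator {y. \<epsilon> < \<bar>x - y\<bar>} y *\<^sub>R (Omega_bar m y / (x - y)))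
                 = (\<lambda>y. S * (indicator B y * f2 y) - S * (indicator A y * f1 y))"
    using truncated_Hilbert_kernel_Omega_bar_right[OF x \<epsilon>(1)]
    by (simp add: fun_eq_iff A_def B_def S_def f1_def f2_def)
  have integrable: "integrable lborel (\<lambda>y. indicator A y * f1 y)" "integrable lborel (\<lambda>y. indicator B y * f2 y)"
    using below(1) above(1) t by (simp_all add: set_integrable_def)
  then show "set_integrable lborel {y. \<epsilon> < \<bar>x - y\<bar>} (\<lambda>y. Omega_bar m y / (x - y))"
    unfolding set_integrable_def split by simp
  have "(LINT y:{y. \<epsilon> < \<bar>x - y\<bar>}|lborel. Omega_bar m y / (x - y))
          = S * (LINT y:B|lborel. f2 y) - S * (LINT y:A|lborel. f1 y)"
    using integrable unfolding set_lebesgue_integral_def split by simp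
  also have "\<dots> = - S * s powr (-m) * pv_powr_truncated m t"
    using below(2) above(2) t \<epsilon>
    by (simp add: A_def B_def interval_lebesgue_integral_le_eq pv_powr_truncated_def algebra_simps)
  finally show "(LINT y:{y. \<epsilon> < \<bar>x - y\<bar>}|lborel. Omega_bar m y / (x - y))
           = - sin (pi * m) * (x - 1) powr (-m) * pv_powr_truncated m (\<epsilon> / (x - 1))"
    by (simp add: S_def s_def t_def)
qed

lemma has_Hilbert_transform_Omega_bar_right:
  fixes m x :: real
  assumes m: "0 < m" "m < 1" and x: "1 < x"
  shows "has_Hilbert_transform (Omega_bar m) x (cos (pi * m) / (x - 1) powr m)"
proof (rule has_Hilbert_transformI)
  show "0 < x - 1" using x by simp
  let ?G = "\<lambda>\<epsilon>. - sin (pi * m) / pi * (x - 1) powr (-m) * pv_powr_truncated m (\<epsilon> / (x - 1))"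
  fix \<epsilon> :: real
  assume "0 < \<epsilon>" "\<epsilon> < x - 1"
  from truncated_Hilbert_integral_Omega_bar_right[OF m x this]
  show "set_integrable lborel {y. \<epsilon> < \<bar>x - y\<bar>} (\<lambda>y. Omega_bar m y / (x - y))"
    and "1 / pi * (LINT y:{y. \<epsilon> < \<bar>x - y\<bar>}|lborel. Omega_bar m y / (x - y)) = ?G \<epsilon>"
    by simp_all
next
  have "filterlim (\<lambda>\<epsilon>. \<epsilon> / (x - 1)) (at_right 0) (at_right 0)"
    using x by real_asymp
  from filterlim_compose[OF pv_powr_truncated_limit[OF m] this]
  have "((\<lambda>\<epsilon>. - sin (pi * m) / pi * (x - 1) powr (-m) * pv_powr_truncated m (\<epsilon> / (x - 1)))
          \<longlongrightarrow> - sin (pi * m) / pi * (x - 1) powr (-m) * (- pi * cot (pi * m))) (at_right 0)"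
    by (intro tendsto_intros)
  moreover have "sin (pi * m) \<noteq> 0"
    using m by (intro sin_gt_zero[THEN less_imp_neq, symmetric]) auto
  ultimately show "((\<lambda>\<epsilon>. - sin (pi * m) / pi * (x - 1) powr (-m) * pv_powr_truncated m (\<epsilon> / (x - 1)))
          \<longlongrightarrow> cos (pi * m) / (x - 1) powr m) (at_right 0)"
    by (simp add: cot_def powr_minus field_simps)
qed

lemma has_Hilbert_transform_Omega_bar:
  fixes m X :: real
  assumes "0 < m" "m < 1" "X \<noteq> 1"
  shows "has_Hilbert_transform (Omega_bar m) X (H_Omega_bar m X)"
proof (cases "X < 1")
  case True
  then show ?thesis
    using has_Hilbert_transform_Omega_bar_left[OF assms(1,2)] by (simp add: H_Omega_bar_def)
next
  case False
  with assms have "1 < X" by simp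
  then show ?thesis
    using has_Hilbert_transform_Omega_bar_right[OF assms(1,2)] by (simp add: H_Omega_bar_def)
qed

section \<open>The velocity and the profile equation\<close>

lemma has_real_derivative_one_minus_powr:
  fixes m Y :: real
  assumes "m \<noteq> 1" "Y < 1"
  shows "((\<lambda>Y. - ((1 - Y) powr (1 - m)) / (1 - m)) has_real_derivative 1 / (1 - Y) powr m) (at Y)"
proof -
  have "((\<lambda>Y. 1 - Y) has_real_derivative -1) (at Y)"
    by (auto intro!: derivative_eq_intros)
  from DERIV_fun_powr[OF this, of "1 - m"] assms
  have "((\<lambda>Y. (1 - Y) powr (1 - m)) has_real_derivative (1 - m) * (1 - Y) powr (- m) * -1) (at Y)"
    by simp
  then have "((\<lambda>Y. - ((1 - Y) powr (1 - m)) / (1 - m)) has_real_derivative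
               - ((1 - m) * (1 - Y) powr (- m) * -1) / (1 - m)) (at Y)"
    by (intro DERIV_cdivide DERIV_minus)
  with assms show ?thesis
    by (simp add: powr_minus_divide)
qed

lemma has_real_derivative_minus_one_powr:
  fixes m Y :: real
  assumes "m \<noteq> 1" "1 < Y"
  shows "((\<lambda>Y. (Y - 1) powr (1 - m) / (1 - m)) has_real_derivative 1 / (Y - 1) powr m) (at Y)"
proof -
  have "((\<lambda>Y. Y - 1) has_real_derivative 1) (at Y)"
    by (auto intro!: derivative_eq_intros)
  from DERIV_fun_powr[OF this, of "1 - m"] assms
  have "((\<lambda>Y. (Y - 1) powr (1 - m)) has_real_derivative (1 - m) * (Y - 1) powr (- m) * 1) (at Y)"
    by simp
  then have "((\<lambda>Y. (Y - 1) powr (1 - m) / (1 - m)) has_real_derivative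
               (1 - m) * (Y - 1) powr (- m) * 1 / (1 - m)) (at Y)"
    by (intro DERIV_cdivide)
  with assms show ?thesis
    by (simp add: powr_minus_divide)
qed

lemma interval_integral_one_minus_powr:
  fixes m Z :: real
  assumes "m \<noteq> 1" "Z < 1"
  shows "(LBINT Y=ereal 0..ereal Z. 1 / (1 - Y) powr m) = (1 - (1 - Z) powr (1 - m)) / (1 - m)"
proof -
  define F where "F Y = - ((1 - Y) powr (1 - m)) / (1 - m)" for Y :: real
  have "(LBINT Y=ereal 0..ereal Z. 1 / (1 - Y) powr m) = F Z - F 0"
  proof (rule interval_integral_FTC_finite)
    show "continuous_on {min 0 Z..max 0 Z} (\<lambda>Y. 1 / (1 - Y) powr m)"
      using assms by (intro continuous_intros) auto
    show "(F has_vector_derivative 1 / (1 - Y) powr m) (at Y within {min 0 Z..max 0 Z})"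
      if "min 0 Z \<le> Y" "Y \<le> max 0 Z" for Y
      using has_real_derivative_one_minus_powr[of m Y] assms that unfolding F_def
      by (auto simp: has_real_derivative_iff_has_vector_derivative intro: has_vector_derivative_at_within)
  qed
  then show ?thesis
    by (simp add: F_def diff_divide_distrib)
qed

lemma interval_integral_one_minus_powr_0_1:
  fixes m :: real
  assumes "m < 1"
  shows "set_integrable lborel (einterval 0 1) (\<lambda>Y. 1 / (1 - Y) powr m)"
    and "(LBINT Y=0..1. 1 / (1 - Y) powr m) = 1 / (1 - m)"
proof -
  define F where "F Y = - ((1 - Y) powr (1 - m)) / (1 - m)" for Y :: real
  have deriv: "(F has_real_derivative 1 / (1 - Y) powr m) (at Y)" if "0 < ereal Y" "ereal Y < 1" for Y
    unfolding F_def using assms that by (intro has_real_derivative_one_minus_powr) auto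
  have cont: "isCont (\<lambda>Y. 1 / (1 - Y) powr m) Y" if "0 < ereal Y" "ereal Y < 1" for Y
    using that by (auto intro!: continuous_intros)
  have "((\<lambda>Y::real. (1 - Y) powr (1 - m)) \<longlongrightarrow> 0) (at_left 1)"
    using assms by (auto intro!: tendsto_eq_intros tendsto_zero_powrI eventually_at_leftI[of 0 1])
  then have "((\<lambda>Y::real. - ((1 - Y) powr (1 - m)) / (1 - m)) \<longlongrightarrow> - 0 / (1 - m)) (at_left 1)"
    using assms by (intro tendsto_divide tendsto_minus tendsto_const) auto
  then have at_1: "((F \<circ> real_of_ereal) \<longlongrightarrow> 0) (at_left 1)"
    unfolding one_ereal_def ereal_tendsto_simps1 F_def by simp
  have at_0: "((F \<circ> real_of_ereal) \<longlongrightarrow> - 1 / (1 - m)) (at_right 0)"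
    unfolding zero_ereal_def ereal_tendsto_simps1 F_def using assms by (auto intro!: tendsto_eq_intros)
  from interval_integral_FTC_nonneg[OF _ deriv cont _ at_0 at_1]
  show "set_integrable lborel (einterval 0 1) (\<lambda>Y. 1 / (1 - Y) powr m)"
    and "(LBINT Y=0..1. 1 / (1 - Y) powr m) = 1 / (1 - m)"
    by auto
qed

lemma interval_integral_minus_one_powr:
  fixes m Z :: real
  assumes "m < 1" "1 < Z"
  shows "set_integrable lborel (einterval 1 Z) (\<lambda>Y. 1 / (Y - 1) powr m)"
    and "(LBINT Y=1..Z. 1 / (Y - 1) powr m) = (Z - 1) powr (1 - m) / (1 - m)"
proof -
  define F where "F Y = (Y - 1) powr (1 - m) / (1 - m)" for Y :: real
  have deriv: "(F has_real_derivative 1 / (Y - 1) powr m) (at Y)" if "1 < ereal Y" "ereal Y < Z" for Y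
    unfolding F_def using assms that by (intro has_real_derivative_minus_one_powr) auto
  have cont: "isCont (\<lambda>Y. 1 / (Y - 1) powr m) Y" if "1 < ereal Y" "ereal Y < Z" for Y
    using that by (auto intro!: continuous_intros)
  have "((\<lambda>Y::real. (Y - 1) powr (1 - m)) \<longlongrightarrow> 0) (at_right 1)"
    using assms by (auto intro!: tendsto_eq_intros tendsto_zero_powrI eventually_at_rightI[of 1 2])
  then have "((\<lambda>Y::real. (Y - 1) powr (1 - m) / (1 - m)) \<longlongrightarrow> 0 / (1 - m)) (at_right 1)"
    using assms by (intro tendsto_divide tendsto_const) auto
  then have at_1: "((F \<circ> real_of_ereal) \<longlongrightarrow> 0) (at_right 1)"
    unfolding one_ereal_def ereal_tendsto_simps1 F_def by simp
  have at_Z: "((F \<circ> real_of_ereal) \<longlongrightarrow> F Z) (at_left (ereal Z))"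
    unfolding ereal_tendsto_simps1 F_def using assms by (auto simp: o_def intro!: tendsto_eq_intros)
  from interval_integral_FTC_nonneg[OF _ deriv cont _ at_1 at_Z] assms
  show "set_integrable lborel (einterval 1 Z) (\<lambda>Y. 1 / (Y - 1) powr m)"
    and "(LBINT Y=1..Z. 1 / (Y - 1) powr m) = (Z - 1) powr (1 - m) / (1 - m)"
    by (auto simp: F_def)
qed

definition U_bar :: "real \<Rightarrow> real \<Rightarrow> real" where
  "U_bar m X = (if X < 1 then 1 - (1 - X) powr (1 - m) else 1 + cos (pi * m) * (X - 1) powr (1 - m)) / (1 - m)"

lemma interval_integral_H_Omega_bar:
  fixes m Z :: real
  assumes "m < 1"
  shows "(LBINT Y=ereal 0..ereal Z. H_Omega_bar m Y) = U_bar m Z"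
proof -
  have left: "H_Omega_bar m Y = 1 / (1 - Y) powr m" if "Y < 1" for Y
    using that by (simp add: H_Omega_bar_def)
  note unit = interval_integral_one_minus_powr_0_1[OF assms]
  consider "Z < 1" | "Z = 1" | "1 < Z" by linarith
  then show ?thesis
  proof cases
    case 1
    then have "(LBINT Y=ereal 0..ereal Z. H_Omega_bar m Y) = (LBINT Y=ereal 0..ereal Z. 1 / (1 - Y) powr m)"
      by (intro interval_integral_cong) (auto simp: left einterval_iff min_def max_def split: if_splits)
    with 1 assms show ?thesis
      by (simp add: interval_integral_one_minus_powr U_bar_def)
  next
    case 2
    then have "(LBINT Y=ereal 0..ereal Z. H_Omega_bar m Y) = (LBINT Y=0..1. 1 / (1 - Y) powr m)"
      by (simp add: zero_ereal_def one_ereal_def) (intro interval_integral_cong, auto simp: left einterval_iff)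
    with 2 unit show ?thesis
      by (simp add: U_bar_def)
  next
    case 3
    define c where "c = cos (pi * m)"
    define g1 where "g1 = (\<lambda>Y. indicator (einterval 0 1) Y * (1 / (1 - Y) powr m))"
    define g2 where "g2 = (\<lambda>Y. indicator (einterval 1 (ereal Z)) Y * (1 / (Y - 1) powr m))"
    note right = interval_integral_minus_one_powr[OF assms 3]
    have integrable: "integrable lborel g1" "integrable lborel g2"
      using unit(1) right(1) by (simp_all add: g1_def g2_def set_integrable_def)
    have split: "(\<lambda>Y. indicator (einterval (ereal 0) (ereal Z)) Y *\<^sub>R H_Omega_bar m Y) = (\<lambda>Y. g1 Y + c * g2 Y)"
      using 3 by (auto simp: fun_eq_iff H_Omega_bar_def c_def g1_def g2_def einterval_iff split: split_indicator)
    have "ereal 0 \<le> ereal Z"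
      using 3 by simp
    then have "(LBINT Y=ereal 0..ereal Z. H_Omega_bar m Y) = integral\<^sup>L lborel (\<lambda>Y. g1 Y + c * g2 Y)"
      by (simp only: interval_lebesgue_integral_le_eq set_lebesgue_integral_def split)
    also have "\<dots> = integral\<^sup>L lborel g1 + c * integral\<^sup>L lborel g2"
      using integrable by simp
    also have "\<dots> = (LBINT Y=0..1. 1 / (1 - Y) powr m) + c * (LBINT Y=1..Z. 1 / (Y - 1) powr m)"
      using 3 by (simp add: g1_def g2_def interval_lebesgue_integral_le_eq set_lebesgue_integral_def)
    finally show ?thesis
      using 3 unit right by (simp add: U_bar_def c_def add_divide_distrib)
  qed
qed

lemma interval_integral_Hilbert_transform_Omega_bar:
  fixes m Z :: real
  assumes "0 < m" "m < 1"
  shows "(LBINT Y=0..Z. Hilbert_transform (Omega_bar m) Y) = U_bar m Z"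
proof -
  have "(LBINT Y=0..Z. Hilbert_transform (Omega_bar m) Y) = (LBINT Y=ereal 0..ereal Z. H_Omega_bar m Y)"
    unfolding zero_ereal_def
    by (rule interval_integral_discrete_difference[where X="{1}"])
      (auto simp: Hilbert_transform_eqI has_Hilbert_transform_Omega_bar assms)
  with assms show ?thesis
    by (simp add: interval_integral_H_Omega_bar)
qed

lemma Omega_bar_has_real_derivative:
  fixes m X :: real
  assumes "X \<noteq> 1"
  shows "(Omega_bar m has_real_derivative m * sin (pi * m) * indicator {Y. Y > 1} X * (X - 1) powr (- m - 1)) (at X)"
proof (cases "X < 1")
  case True
  have "eventually (\<lambda>Z. Z < 1) (nhds X)"
    using eventually_nhds_in_open[of "{..<1}" X] True by auto
  then have "eventually (\<lambda>Z. (\<lambda>_. 0) Z = Omega_bar m Z) (nhds X)"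
    by eventually_elim (simp add: Omega_bar_def)
  from DERIV_const[of 0 "at X"] this have "(Omega_bar m has_real_derivative 0) (at X)"
    by (subst (asm) DERIV_cong_ev[OF refl _ refl])
  with True show ?thesis
    by simp
next
  case False
  with assms have "1 < X" by simp
  then have "eventually (\<lambda>Z. 1 < Z) (nhds X)"
    using eventually_nhds_in_open[of "{1<..}" X] by auto
  then have "eventually (\<lambda>Z. - sin (pi * m) * (Z - 1) powr (-m) = Omega_bar m Z) (nhds X)"
    by eventually_elim (simp add: Omega_bar_def powr_minus_divide)
  moreover have "((\<lambda>Z. Z - 1) has_real_derivative 1) (at X)"
    by (auto intro!: derivative_eq_intros)
  from DERIV_cmult[OF DERIV_fun_powr[OF this, of "-m"], of "- sin (pi * m)"] \<open>1 < X\<close>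
  have "((\<lambda>Z. - sin (pi * m) * (Z - 1) powr (-m)) has_real_derivative
          m * sin (pi * m) * (X - 1) powr (- m - 1)) (at X)"
    by (simp add: mult_ac)
  ultimately show ?thesis
    using \<open>1 < X\<close> by (simp add: DERIV_cong_ev[OF refl _ refl])
qed

lemma U_bar_has_real_derivative:
  fixes m X :: real
  assumes "m < 1" "X \<noteq> 1"
  shows "(U_bar m has_real_derivative H_Omega_bar m X) (at X)"
proof (cases "X < 1")
  case True
  have "eventually (\<lambda>Z. Z < 1) (nhds X)"
    using eventually_nhds_in_open[of "{..<1}" X] True by auto
  then have "eventually (\<lambda>Z. 1 / (1 - m) + - ((1 - Z) powr (1 - m)) / (1 - m) = U_bar m Z) (nhds X)"
    by eventually_elim (simp add: U_bar_def diff_divide_distrib)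
  moreover have "((\<lambda>Z. 1 / (1 - m) + - ((1 - Z) powr (1 - m)) / (1 - m)) has_real_derivative
                   0 + 1 / (1 - X) powr m) (at X)"
    using assms True by (intro DERIV_add DERIV_const has_real_derivative_one_minus_powr) auto
  ultimately show ?thesis
    using True by (simp add: DERIV_cong_ev[OF refl _ refl] H_Omega_bar_def)
next
  case False
  with assms have "1 < X" by simp
  then have "eventually (\<lambda>Z. 1 < Z) (nhds X)"
    using eventually_nhds_in_open[of "{1<..}" X] by auto
  then have "eventually (\<lambda>Z. 1 / (1 - m) + cos (pi * m) * ((Z - 1) powr (1 - m) / (1 - m)) = U_bar m Z) (nhds X)"
    by eventually_elim (simp add: U_bar_def add_divide_distrib)
  moreover have "((\<lambda>Z. 1 / (1 - m) + cos (pi * m) * ((Z - 1) powr (1 - m) / (1 - m))) has_real_derivative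
                   0 + cos (pi * m) * (1 / (X - 1) powr m)) (at X)"
    using assms \<open>1 < X\<close> by (intro DERIV_add DERIV_const DERIV_cmult has_real_derivative_minus_one_powr) auto
  ultimately show ?thesis
    using \<open>1 < X\<close> by (simp add: DERIV_cong_ev[OF refl _ refl] H_Omega_bar_def)
qed

lemma Omega_bar_profile_equation:
  fixes a X :: real
  assumes "a < 0"
  defines "m \<equiv> 1 / (1 - a)"
  shows "((1 - a) * X + a * U_bar m X) * (m * sin (pi * m) * indicator {Y. Y > 1} X * (X - 1) powr (- m - 1))
           = (- 1 + H_Omega_bar m X) * Omega_bar m X"
proof (cases "1 < X")
  case True
  define t where "t = X - 1"
  define P where "P = t powr m"
  define c where "c = cos (pi * m)"
  have "0 < m" "m < 1" "a = 1 - 1 / m"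
    using assms(1) by (auto simp: m_def field_simps)
  have "0 < t" "0 < P" "X = 1 + t"
    using True by (simp_all add: t_def P_def)
  have powr: "(X - 1) powr (- m - 1) = 1 / (P * t)"
    using \<open>0 < t\<close> by (simp add: P_def t_def powr_diff powr_minus_divide)
  have U: "U_bar m X = (1 + c * (t / P)) / (1 - m)"
    using True \<open>0 < t\<close> by (simp add: U_bar_def c_def P_def t_def powr_diff)
  have H: "H_Omega_bar m X = c / P" and Omega: "Omega_bar m X = - sin (pi * m) / P"
    using True by (simp_all add: H_Omega_bar_def Omega_bar_def c_def P_def t_def)
  show ?thesis
    using True \<open>0 < m\<close> \<open>m < 1\<close> \<open>0 < t\<close> \<open>0 < P\<close>
    unfolding powr U H Omega unfolding \<open>a = 1 - 1 / m\<close> \<open>X = 1 + t\<close> by (simp add: field_simps)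
qed (simp add: Omega_bar_def)

theorem mainTheorem4:
  fixes a :: real
  assumes "a < 0"
  defines "\<mu> \<equiv> 1 / (1 - a)"
  defines "\<Omega> \<equiv> (\<lambda>X::real. - sin (pi * \<mu>) * indicator {Y. Y > 1} X / \<bar>1 - X\<bar> powr \<mu>)"
  defines "cl \<equiv> 1 - a"
  defines "c\<omega> \<equiv> (-1::real)"
  defines "U \<equiv> (\<lambda>X::real. LBINT Y=0..X. Hilbert_transform \<Omega> Y)"
  shows "(\<forall>X. X \<noteq> 1 \<longrightarrow> has_Hilbert_transform \<Omega> X
            ((indicator {Y. Y < 1} X + indicator {Y. Y > 1} X * cos (pi * \<mu>)) / \<bar>1 - X\<bar> powr \<mu>))
       \<and> (\<forall>X. X \<noteq> 1 \<longrightarrow> (\<exists>d\<Omega> dU. (\<Omega> has_real_derivative d\<Omega>) (at X)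
                 \<and> (U has_real_derivative dU) (at X)
                 \<and> (cl * X + a * U X) * d\<Omega> = (c\<omega> + dU) * \<Omega> X))"
proof -
  have \<mu>: "0 < \<mu>" "\<mu> < 1"
    using assms(1) by (auto simp: \<mu>_def field_simps)
  have \<Omega>_eq: "\<Omega> = Omega_bar \<mu>"
    by (simp add: fun_eq_iff \<Omega>_def Omega_bar_def)
  have U_eq: "U = U_bar \<mu>"
    by (simp add: fun_eq_iff U_def \<Omega>_eq interval_integral_Hilbert_transform_Omega_bar[OF \<mu>])
  have "has_Hilbert_transform \<Omega> X (H_Omega_bar \<mu> X)" if "X \<noteq> 1" for X
    unfolding \<Omega>_eq using \<mu> that by (rule has_Hilbert_transform_Omega_bar)
  moreover have "(cl * X + a * U X) * (\<mu> * sin (pi * \<mu>) * indicator {Y. Y > 1} X * (X - 1) powr (- \<mu> - 1))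
                   = (c\<omega> + H_Omega_bar \<mu> X) * \<Omega> X" for X
    unfolding cl_def c\<omega>_def U_eq \<Omega>_eq \<mu>_def using assms(1) by (rule Omega_bar_profile_equation)
  ultimately show ?thesis
    using Omega_bar_has_real_derivative U_bar_has_real_derivative[OF \<mu>(2)]
    unfolding H_Omega_bar_def \<Omega>_eq U_eq by blast
qed

end
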